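(* Assume PONO holds. Let $Q$ be a finite nonempty set of tables, $\mathbf{W}\in\mathbb{R}_{\ge0}^{\mathbb{O}}$ a weight vector and $\alpha_U\ge1$. Run RTA with internal precision $\alpha_i=\alpha_U^{1/|Q|}$ and let $p$ be a plan in $\mathcal{P}^Q$ minimizing $C_{\mathbf{W}}(\mathbf{c}(p))$. Then $C_{\mathbf{W}}(\mathbf{c}(p))\le\alpha_U\cdot\min_{p'\in\mathcal{A}(Q)}C_{\mathbf{W}}(\mathbf{c}(p'))$, i.e. $p$ is an $\alpha_U$-approximate solution of the weighted MOQO instance $\langle Q,\mathbf{W}\rangle$.
   Context: Setting as follows. A finite set $\mathbb{O}$ of $l\ge1$ objectives, a finite set $\mathbb{J}$ of join operators; each table $t$ has a finite nonempty set $\mathcal{A}(\{t\})$ of scan plans; for $|q|\ge2$, $\mathcal{A}(q)$ is the set of plans $\mathrm{Combine}(j,p_1,p_2)$ with $q=q_1\dot\cup q_2$ nonempty parts, $j\in\mathbb{J}$, $p_i\in\mathcal{A}(q_i)$. Each plan has cost vector $\mathbf{c}(p)\in\mathbb{R}_{\ge0}^{\mathbb{O}}$; $C_{\mathbf{W}}(\mathbf{c})=\sum_{o}\mathbf{c}^o\mathbf{W}^o$. $\mathbf{c}_1\preceq\mathbf{c}_2$ iff $\mathbf{c}_1^o\le\mathbf{c}_2^o$ for all $o$; $\mathbf{c}_1\preceq_\alpha\mathbf{c}_2$ iff $\mathbf{c}_1^o\le\alpha\mathbf{c}_2^o$ for all $o$. PONO: for all $\alpha\ge1$, $j$, and plans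 with $\mathbf{c}(p_L^* )\preceq_\alpha\mathbf{c}(p_L)$, $\mathbf{c}(p_R^* )\preceq_\alpha\mathbf{c}(p_R)$ ($p_L,p_L^*$ for the same table set, likewise $p_R,p_R^*$), $\mathbf{c}(\mathrm{Combine}(j,p_L^*,p_R^* ))\preceq_\alpha\mathbf{c}(\mathrm{Combine}(j,p_L,p_R))$. $\mathrm{Prune}(\mathcal{P},p_N,\alpha_i)$: if no $p\in\mathcal{P}$ has $\mathbf{c}(p)\preceq_{\alpha_i}\mathbf{c}(p_N)$, delete all $p\in\mathcal{P}$ with $\mathbf{c}(p_N)\preceq\mathbf{c}(p)$ and insert $p_N$; else do nothing. RTA: for each $t\in Q$, $\mathcal{P}^{\{t\}}$ starts empty and $\mathrm{Prune}$ is called with every scan plan of $t$; then for $k=2,\dots,|Q|$ and each $q\subseteq Q$ with $|q|=k$, $\mathcal{P}^q$ starts empty and $\mathrm{Prune}(\mathcal{P}^q,\mathrm{Combine}(j,p_1,p_2),\alpha_i)$ is called for all splits $q=q_1\dot\cup q_2$ into nonempty parts, all $p_1\in\mathcal{P}^{q_1}$, $p_2\in\mathcal{P}^{q_2}$, $j\in\mathbb{J}$. *)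

theory Defs
  imports Complex_Main
begin

text \<open>Query plans: a scan plan of table t (with scan-operator/plan identifier s),
  or a join of two sub-plans with join operator j.\<close>
datatype ('t, 's, 'j) plan = Scan 't 's | Combine 'j "('t, 's, 'j) plan" "('t, 's, 'j) plan"

definition dom_le :: "('o \<Rightarrow> real) \<Rightarrow> ('o \<Rightarrow> real) \<Rightarrow> bool" where
  "dom_le c1 c2 \<longleftrightarrow> (\<forall>ob. c1 ob \<le> c2 ob)"

definition approx_dom :: "real \<Rightarrow> ('o \<Rightarrow> real) \<Rightarrow> ('o \<Rightarrow> real) \<Rightarrow> bool" where
  "approx_dom \<alpha> c1 c2 \<longleftrightarrow> (\<forall>ob. c1 ob \<le> \<alpha> * c2 ob)"

definition weighted_cost :: "('o::finite \<Rightarrow> real) \<Rightarrow> ('o \<Rightarrow> real) \<Rightarrow> real" where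
  "weighted_cost W c = (\<Sum>ob\<in>UNIV. c ob * W ob)"

inductive plan_for :: "('t \<Rightarrow> 's set) \<Rightarrow> 'j set \<Rightarrow> 't set \<Rightarrow> ('t, 's, 'j) plan \<Rightarrow> bool"
  for scans J where
  scan: "s \<in> scans t \<Longrightarrow> plan_for scans J {t} (Scan t s)"
| comb: "\<lbrakk> j \<in> J; q1 \<noteq> {}; q2 \<noteq> {}; q1 \<inter> q2 = {};
           plan_for scans J q1 p1; plan_for scans J q2 p2 \<rbrakk>
         \<Longrightarrow> plan_for scans J (q1 \<union> q2) (Combine j p1 p2)"

definition PONO :: "('t \<Rightarrow> 's set) \<Rightarrow> 'j set \<Rightarrow> (('t, 's, 'j) plan \<Rightarrow> 'o \<Rightarrow> real) \<Rightarrow> bool" where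
  "PONO scans J c \<longleftrightarrow>
     (\<forall>\<alpha>\<ge>1. \<forall>j\<in>J. \<forall>pL pLs pR pRs.
        (\<exists>qL. plan_for scans J qL pL \<and> plan_for scans J qL pLs) \<longrightarrow>
        (\<exists>qR. plan_for scans J qR pR \<and> plan_for scans J qR pRs) \<longrightarrow>
        approx_dom \<alpha> (c pLs) (c pL) \<longrightarrow> approx_dom \<alpha> (c pRs) (c pR) \<longrightarrow>
        approx_dom \<alpha> (c (Combine j pLs pRs)) (c (Combine j pL pR)))"

definition Prune :: "(('t, 's, 'j) plan \<Rightarrow> 'o \<Rightarrow> real) \<Rightarrow> real \<Rightarrow>
    ('t, 's, 'j) plan set \<Rightarrow> ('t, 's, 'j) plan \<Rightarrow> ('t, 's, 'j) plan set" where
  "Prune c \<alpha> P pN =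
     (if \<exists>p\<in>P. approx_dom \<alpha> (c p) (c pN) then P
      else insert pN {p \<in> P. \<not> dom_le (c pN) (c p)})"

text \<open>Candidate plans that RTA feeds into Prune for the table set q, given the
  already computed pruned sets P of strictly smaller table sets.\<close>
definition candidates :: "('t \<Rightarrow> 's set) \<Rightarrow> 'j set \<Rightarrow> ('t set \<Rightarrow> ('t, 's, 'j) plan set) \<Rightarrow>
    't set \<Rightarrow> ('t, 's, 'j) plan set" where
  "candidates scans J P q =
     (if card q = 1 then {Scan t s | t s. q = {t} \<and> s \<in> scans t}
      else {Combine j p1 p2 | j q1 q2 p1 p2. j \<in> J \<and> q1 \<noteq> {} \<and> q2 \<noteq> {} \<and>
              q1 \<inter> q2 = {} \<and> q1 \<union> q2 = q \<and> p1 \<in> P q1 \<and> p2 \<in> P q2})"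

text \<open>P is a possible outcome of RTA on Q with internal precision \<alpha>: for every nonempty
  q \<subseteq> Q, P q is obtained from the empty set by calling Prune with every candidate
  plan exactly once, in some (arbitrary) order.\<close>
definition RTA_result :: "('t \<Rightarrow> 's set) \<Rightarrow> 'j set \<Rightarrow> (('t, 's, 'j) plan \<Rightarrow> 'o \<Rightarrow> real) \<Rightarrow>
    't set \<Rightarrow> real \<Rightarrow> ('t set \<Rightarrow> ('t, 's, 'j) plan set) \<Rightarrow> bool" where
  "RTA_result scans J c Q \<alpha> P \<longleftrightarrow>
     (\<forall>q. q \<subseteq> Q \<and> q \<noteq> {} \<longrightarrow>
        (\<exists>xs. distinct xs \<and> set xs = candidates scans J P q \<and>
              P q = foldl (Prune c \<alpha>) {} xs))"

end

theory Submission
  imports Defs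
begin

(* One call of Prune with precision
   \<alpha> never loses coverage: every plan that was \<alpha>-dominated by some kept plan before
   remains so afterwards, and the new plan is \<alpha>-dominated after the call.  Hence the
   pruned set P q computed by RTA \<alpha>-dominates each of its candidates, and it only
   contains candidates.  From this we derive, by induction over the table set:
   (1) soundness: every plan in P q is a plan for q;
   (2) coverage (Theorem 1 of the paper): with PONO, every plan for q \<subseteq> Q is
       \<alpha>^|q|-dominated by some plan in P q -- the two sub-plans are covered with precision
       \<alpha>^(|q|-1), PONO lifts this to their combination, and the final Prune step costs
       one more factor \<alpha>.
   With \<alpha> = \<alpha>U^(1/|Q|) the factor is \<alpha>U, and since weighted cost with non-negative
   weights is monotone under approximate dominance, the cheapest plan of P Q is an
   \<alpha>U-approximate solution. *)

lemma approx_dom_refl: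
  assumes "\<alpha> \<ge> 1" and "\<And>ob. c ob \<ge> 0"
  shows "approx_dom \<alpha> c c"
  unfolding approx_dom_def
proof
  fix ob
  have "1 * c ob \<le> \<alpha> * c ob" using assms by (intro mult_right_mono) auto
  then show "c ob \<le> \<alpha> * c ob" by simp
qed

lemma approx_dom_trans:
  assumes "approx_dom \<alpha> c1 c2" and "approx_dom \<beta> c2 c3" and "\<alpha> \<ge> 0"
  shows "approx_dom (\<alpha> * \<beta>) c1 c3"
  unfolding approx_dom_def
proof
  fix ob
  have "c1 ob \<le> \<alpha> * c2 ob" using assms(1) by (simp add: approx_dom_def)
  also have "\<dots> \<le> \<alpha> * (\<beta> * c3 ob)"
    using assms(2,3) by (simp add: approx_dom_def mult_left_mono)
  finally show "c1 ob \<le> \<alpha> * \<beta> * c3 ob" by simp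
qed

lemma approx_dom_mono:
  assumes "approx_dom \<alpha> c1 c2" and "\<alpha> \<le> \<beta>" and "\<And>ob. c2 ob \<ge> 0"
  shows "approx_dom \<beta> c1 c2"
  using assms unfolding approx_dom_def by (meson mult_right_mono order_trans)

lemma weighted_cost_approx_dom:
  assumes "approx_dom \<alpha> c1 c2" and "\<And>ob. W ob \<ge> 0"
  shows "weighted_cost W c1 \<le> \<alpha> * weighted_cost W c2"
  unfolding weighted_cost_def sum_distrib_left
proof (rule sum_mono)
  fix ob
  have "c1 ob * W ob \<le> (\<alpha> * c2 ob) * W ob"
    using assms unfolding approx_dom_def by (simp add: mult_right_mono)
  then show "c1 ob * W ob \<le> \<alpha> * (c2 ob * W ob)" by (simp add: mult.assoc)
qed

lemma foldl_Prune_subset: "foldl (Prune c \<alpha>) P xs \<subseteq> P \<union> set xs"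
proof (induction xs arbitrary: P)
  case Nil
  then show ?case by simp
next
  case (Cons x xs)
  have "Prune c \<alpha> P x \<subseteq> P \<union> {x}" unfolding Prune_def by auto
  with Cons.IH[of "Prune c \<alpha> P x"] show ?case by auto
qed

text \<open>A plan dominated by a kept plan stays dominated: a plan is only discarded in favour of
  a new plan that dominates it exactly.\<close>
lemma Prune_keeps_cover:
  assumes "p \<in> P" and "approx_dom \<alpha> (c p) (c y)"
  shows "\<exists>p'\<in>Prune c \<alpha> P x. approx_dom \<alpha> (c p') (c y)"
proof (cases "dom_le (c x) (c p)")
  case True
  then have "approx_dom \<alpha> (c x) (c y)"
    using assms(2) unfolding dom_le_def approx_dom_def by (meson order_trans)
  then show ?thesis using assms unfolding Prune_def by auto
next
  case False
  then show ?thesis using assms unfolding Prune_def by auto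
qed

lemma Prune_covers_new:
  assumes "\<alpha> \<ge> 1" and "\<And>ob. c x ob \<ge> 0"
  shows "\<exists>p\<in>Prune c \<alpha> P x. approx_dom \<alpha> (c p) (c x)"
  using approx_dom_refl[OF assms] unfolding Prune_def by auto

lemma foldl_Prune_covers:
  assumes "\<alpha> \<ge> 1" and "\<And>p ob. c p ob \<ge> 0"
    and "\<forall>y\<in>A. \<exists>p\<in>P. approx_dom \<alpha> (c p) (c y)"
  shows "\<forall>y\<in>A \<union> set xs. \<exists>p\<in>foldl (Prune c \<alpha>) P xs. approx_dom \<alpha> (c p) (c y)"
  using assms(3)
proof (induction xs arbitrary: A P)
  case Nil
  then show ?case by simp
next
  case (Cons x xs)
  have "\<forall>y\<in>A \<union> {x}. \<exists>p\<in>Prune c \<alpha> P x. approx_dom \<alpha> (c p) (c y)"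
  proof
    fix y assume "y \<in> A \<union> {x}"
    then consider "y \<in> A" | "y = x" by blast
    then show "\<exists>p\<in>Prune c \<alpha> P x. approx_dom \<alpha> (c p) (c y)"
    proof cases
      case 1
      then obtain p where "p \<in> P" "approx_dom \<alpha> (c p) (c y)" using Cons.prems by blast
      then show ?thesis by (rule Prune_keeps_cover)
    next
      case 2
      then show ?thesis using Prune_covers_new[OF assms(1,2)] by simp
    qed
  qed
  from Cons.IH[OF this] show ?case by auto
qed

lemma RTA_result_fold:
  assumes "RTA_result scans J c Q \<alpha> P" and "q \<subseteq> Q" and "q \<noteq> {}"
  obtains xs where "set xs = candidates scans J P q" and "P q = foldl (Prune c \<alpha>) {} xs"
  using assms unfolding RTA_result_def by blast

lemma RTA_subset_candidates:
  assumes "RTA_result scans J c Q \<alpha> P" and "q \<subseteq> Q" and "q \<noteq> {}"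
  shows "P q \<subseteq> candidates scans J P q"
  using foldl_Prune_subset[of c \<alpha> "{}"] by (metis RTA_result_fold[OF assms] Un_empty_left)

lemma RTA_covers_candidates:
  assumes "RTA_result scans J c Q \<alpha> P" and "q \<subseteq> Q" and "q \<noteq> {}"
    and "\<alpha> \<ge> 1" and "\<And>p ob. c p ob \<ge> 0" and "y \<in> candidates scans J P q"
  shows "\<exists>p\<in>P q. approx_dom \<alpha> (c p) (c y)"
proof -
  obtain xs where xs: "set xs = candidates scans J P q" "P q = foldl (Prune c \<alpha>) {} xs"
    using RTA_result_fold[OF assms(1-3)] .
  show ?thesis
    using foldl_Prune_covers[where c=c and A="{}" and P="{}" and xs=xs, OF assms(4,5)]
      xs assms(6) by simp
qed

lemma card_disjoint_split:
  assumes "finite (q1 \<union> q2)" and "q1 \<noteq> {}" and "q2 \<noteq> {}" and "q1 \<inter> q2 = {}"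
  shows "card (q1 \<union> q2) = card q1 + card q2" and "card q1 > 0" and "card q2 > 0"
  using assms by (auto simp: card_Un_disjoint card_gt_0_iff)

lemma RTA_sound:
  assumes run: "RTA_result scans J c Q \<alpha> P" and "finite Q"
  shows "q \<subseteq> Q \<Longrightarrow> q \<noteq> {} \<Longrightarrow> x \<in> P q \<Longrightarrow> plan_for scans J q x"
proof (induction "card q" arbitrary: q x rule: less_induct)
  case less
  have fin: "finite q" using less.prems(1) \<open>finite Q\<close> finite_subset by blast
  have cand: "x \<in> candidates scans J P q"
    using RTA_subset_candidates[OF run less.prems(1,2)] less.prems(3) by blast
  show ?case
  proof (cases "card q = 1")
    case True
    then show ?thesis using cand unfolding candidates_def by (auto intro: plan_for.scan)
  next
    case False
    then obtain j q1 q2 p1 p2 where split: "x = Combine j p1 p2" "j \<in> J" "q1 \<noteq> {}"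
        "q2 \<noteq> {}" "q1 \<inter> q2 = {}" "q1 \<union> q2 = q" "p1 \<in> P q1" "p2 \<in> P q2"
      using cand unfolding candidates_def by (simp only: if_False) blast
    have "card q1 < card q" "card q2 < card q"
      using card_disjoint_split[of q1 q2] split fin by auto
    then have "plan_for scans J q1 p1" "plan_for scans J q2 p2"
      using less.hyps less.prems(1) split by auto
    then show ?thesis using split plan_for.comb by metis
  qed
qed

lemma PONO_combine:
  assumes "PONO scans J c" and "\<alpha> \<ge> 1" and "j \<in> J"
    and "plan_for scans J qL pL" "plan_for scans J qL pLs"
    and "plan_for scans J qR pR" "plan_for scans J qR pRs"
    and "approx_dom \<alpha> (c pLs) (c pL)" and "approx_dom \<alpha> (c pRs) (c pR)"
  shows "approx_dom \<alpha> (c (Combine j pLs pRs)) (c (Combine j pL pR))"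
  using assms unfolding PONO_def by blast

theorem RTA_coverage:
  assumes run: "RTA_result scans J c Q \<alpha> P" and "finite Q"
    and pono: "PONO scans J c" and \<alpha>: "\<alpha> \<ge> 1" and c_nonneg: "\<And>p ob. c p ob \<ge> 0"
  shows "plan_for scans J q p' \<Longrightarrow> q \<subseteq> Q \<Longrightarrow>
    \<exists>ps\<in>P q. approx_dom (\<alpha> ^ card q) (c ps) (c p')"
proof (induction rule: plan_for.induct)
  case (scan s t)
  then have "Scan t s \<in> candidates scans J P {t}" unfolding candidates_def by auto
  then show ?case using RTA_covers_candidates[OF run _ _ \<alpha> c_nonneg] scan by simp
next
  case (comb j q1 q2 p1 p2)
  let ?q = "q1 \<union> q2" and ?\<beta> = "\<alpha> ^ (card (q1 \<union> q2) - 1)"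
  have cards: "card ?q = card q1 + card q2" "card q1 > 0" "card q2 > 0"
    using card_disjoint_split[of q1 q2] comb.hyps(2-4) comb.prems \<open>finite Q\<close>
      finite_subset by blast+
  obtain s1 where s1: "s1 \<in> P q1" "approx_dom (\<alpha> ^ card q1) (c s1) (c p1)"
    using comb.IH(1) comb.prems by auto
  obtain s2 where s2: "s2 \<in> P q2" "approx_dom (\<alpha> ^ card q2) (c s2) (c p2)"
    using comb.IH(2) comb.prems by auto
  \<comment> \<open>both sub-plans are covered with the common precision \<alpha>^(|q|-1)\<close>
  have "\<alpha> ^ card q1 \<le> ?\<beta>" "\<alpha> ^ card q2 \<le> ?\<beta>"
    using \<alpha> cards by (auto intro: power_increasing)
  then have s1': "approx_dom ?\<beta> (c s1) (c p1)" and s2': "approx_dom ?\<beta> (c s2) (c p2)"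
    using approx_dom_mono s1(2) s2(2) c_nonneg by blast+
  have "plan_for scans J q1 s1" "plan_for scans J q2 s2"
    using RTA_sound[OF run \<open>finite Q\<close>] s1(1) s2(1) comb.hyps(2,3) comb.prems by auto
  then have joined: "approx_dom ?\<beta> (c (Combine j s1 s2)) (c (Combine j p1 p2))"
    using PONO_combine[OF pono _ comb.hyps(1)] comb.hyps(5,6) s1' s2' \<alpha> by simp
  \<comment> \<open>the combination of the kept sub-plans is a candidate, covered up to one more \<alpha>\<close>
  have "Combine j s1 s2 \<in> candidates scans J P ?q"
    using cards comb.hyps(1-4) s1(1) s2(1) unfolding candidates_def by auto
  then obtain ps where ps: "ps \<in> P ?q" "approx_dom \<alpha> (c ps) (c (Combine j s1 s2))"
    using RTA_covers_candidates[OF run comb.prems _ \<alpha> c_nonneg] comb.hyps(2) by blast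
  have "approx_dom (\<alpha> * ?\<beta>) (c ps) (c (Combine j p1 p2))"
    using approx_dom_trans[OF ps(2) joined] \<alpha> by simp
  moreover have "\<alpha> * ?\<beta> = \<alpha> ^ card ?q"
    using cards by (simp add: power_eq_if)
  ultimately show ?case using ps(1) by auto
qed

theorem corollary1:
  fixes scans :: "'t \<Rightarrow> 's set"
    and J :: "'j set"
    and c :: "('t, 's, 'j) plan \<Rightarrow> 'o::finite \<Rightarrow> real"
    and Q :: "'t set"
    and W :: "'o \<Rightarrow> real"
    and \<alpha>U :: real
    and P :: "'t set \<Rightarrow> ('t, 's, 'j) plan set"
    and p :: "('t, 's, 'j) plan"
  assumes scans_fin: "\<And>t. finite (scans t)"
    and scans_ne: "\<And>t. scans t \<noteq> {}"
    and J_fin: "finite J"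
    and c_nonneg: "\<And>p ob. c p ob \<ge> 0"
    and pono: "PONO scans J c"
    and Q_fin: "finite Q" and Q_ne: "Q \<noteq> {}"
    and W_nonneg: "\<And>ob. W ob \<ge> 0"
    and \<alpha>U_ge: "\<alpha>U \<ge> 1"
    and run: "RTA_result scans J c Q (\<alpha>U powr (1 / real (card Q))) P"
    and p_in: "p \<in> P Q"
    and p_min: "\<forall>p'\<in>P Q. weighted_cost W (c p) \<le> weighted_cost W (c p')"
  shows "\<forall>p'. plan_for scans J Q p' \<longrightarrow> weighted_cost W (c p) \<le> \<alpha>U * weighted_cost W (c p')"
proof (intro allI impI)
  fix p' assume p': "plan_for scans J Q p'"
  define \<alpha> where "\<alpha> = \<alpha>U powr (1 / real (card Q))"
  have \<alpha>: "\<alpha> \<ge> 1" unfolding \<alpha>_def using \<alpha>U_ge by (simp add: ge_one_powr_ge_zero)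
  have "card Q > 0" using Q_fin Q_ne by (simp add: card_gt_0_iff)
  then have "\<alpha> ^ card Q = \<alpha>U" unfolding \<alpha>_def using \<alpha>U_ge
    by (simp add: powr_realpow[symmetric] powr_powr)
  then obtain ps where "ps \<in> P Q" and ps: "approx_dom \<alpha>U (c ps) (c p')"
    using RTA_coverage[OF run[folded \<alpha>_def] Q_fin pono \<alpha> c_nonneg p'] by auto
  moreover have "weighted_cost W (c ps) \<le> \<alpha>U * weighted_cost W (c p')"
    using weighted_cost_approx_dom W_nonneg ps by blast
  ultimately show "weighted_cost W (c p) \<le> \<alpha>U * weighted_cost W (c p')"
    using p_min by fastforce
qed

end
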